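(* Let $V$ be a $K$-vector space and $A=\mathrm{Tricub}(V)$ the free cubical trialgebra on $V$. Consider the chain complex $$C^{\mathrm{Tricub}}_n(A)=K[Q_{n-1}]\otimes A^{\otimes n}\quad(n\ge1),\qquad d=\sum_{i=1}^{n-1}(-1)^i d_i,$$ where, for $X=(X_1,\dots,X_{n-1})\in Q_{n-1}$, $$d_i(X;a_1,\dots,a_n)=(d_i(X);a_1,\dots,a_i\circ_i^X a_{i+1},\dots,a_n).$$ Here $d_i(X)\in Q_{n-2}$ is obtained by deleting the coordinate $X_i$, and $\circ_i^X$ is $\dashv$, $\perp$ or $\vdash$ according as $X_i=-1$, $0$ or $+1$. Then the homology of this complex is $V$ in degree $1$ and $0$ in all degrees $\ge2$.
   Context: A cubical trialgebra is a $K$-vector space $A$ with three bilinear operations $\dashv,\vdash,\perp$ satisfying the nine relations $(x\circ_1y)\circ_2z=x\circ_1(y\circ_2z)$ for all $\circ_1,\circ_2\in\{\dashv,\vdash,\perp\}$. $\mathrm{Tricub}(V)$ denotes the free cubical trialgebra on $V$. $Q_m=\{-1,0,+1\}^m$, and $K[Q_m]$ is the vector space with basis $Q_m$. *)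

theory Defs
  imports Main
begin

text \<open>Coordinates of the cube Q_m = {-1,0,+1}^m: Lt = -1 (left operation),
  Mid = 0 (middle operation), Rt = +1 (right operation).\<close>
datatype cube = Lt | Mid | Rt

text \<open>Monomials of the free cubical trialgebra Tricub(V) on V = K[B] (B a basis of V,
  given by the type 'b): a monomial (X; b_1,...,b_k) with X in Q_(k-1) is encoded as
  (b_1, [(X_1,b_2),...,(X_(k-1),b_k)]).  Tricub(V) = free vector space on these monomials.\<close>
type_synonym 'b mono = "'b \<times> (cube \<times> 'b) list"

text \<open>The three operations on monomials: (X;v) o (Y;w) = (X,s,Y; v,w), where s = -1,0,+1
  for the left, middle, right operation respectively.\<close>
fun mmul :: "cube \<Rightarrow> 'b mono \<Rightarrow> 'b mono \<Rightarrow> 'b mono" where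
  "mmul s (b, L) (c, M) = (b, L @ (s, c) # M)"

text \<open>Basis elements of C_n = K[Q_(n-1)] (x) A^(x)n: pairs (X, [a_1,...,a_n]) with
  length X = n-1 and a_i monomials of A.\<close>
type_synonym 'b cbasis = "cube list \<times> 'b mono list"

definition face :: "nat \<Rightarrow> 'b cbasis \<Rightarrow> 'b cbasis" where
  "face i x = (take (i - 1) (fst x) @ drop i (fst x),
               take (i - 1) (snd x) @ [mmul (fst x ! (i - 1)) (snd x ! (i - 1)) (snd x ! i)]
                 @ drop (i + 1) (snd x))"

definition chains :: "nat \<Rightarrow> ('b cbasis \<Rightarrow> 'k::field) set" where
  "chains n = {f. finite {x. f x \<noteq> 0} \<and>
                  (\<forall>x. f x \<noteq> 0 \<longrightarrow> length (fst x) + 1 = n \<and> length (snd x) = n)}"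

definition bd :: "('b cbasis \<Rightarrow> 'k::field) \<Rightarrow> ('b cbasis \<Rightarrow> 'k)" where
  "bd f = (\<lambda>y. \<Sum>x\<in>{x. f x \<noteq> 0}. f x *
              (\<Sum>i\<in>{1..<length (snd x)}. if face i x = y then (-1) ^ i else 0))"

definition inclV :: "('b \<Rightarrow> 'k::field) \<Rightarrow> ('b cbasis \<Rightarrow> 'k)" where
  "inclV v = (\<lambda>x. if fst x = [] \<and> (\<exists>b. snd x = [(b, [])]) then v (fst (hd (snd x))) else 0)"

end

theory Submission
  imports Defs
begin

text \<open>The complex is contractible up to the generators.  Call a basis chain
  \<open>(X; a\<^sub>1, \<dots>, a\<^sub>n)\<close> decomposable if its first factor is a product \<open>a\<^sub>1 = b \<circ>\<^sub>s a'\<close> with \<open>b\<close> a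
  generator.  Splitting it gives \<open>(s X; b, a', a\<^sub>2, \<dots>, a\<^sub>n)\<close>, and the face \<open>d\<^sub>1\<close> merges this
  back.  Let \<open>h\<close> send a decomposable basis chain to minus its splitting (the sign cancels the
  \<open>(-1)\<^sup>1\<close> of \<open>d\<^sub>1\<close>) and every other basis chain to \<open>0\<close>.  The other faces commute with
  splitting, so \<open>dh + hd = id\<close> in degrees \<open>\<ge> 2\<close>, while in degree \<open>1\<close>, where \<open>d = 0\<close>, \<open>dh\<close> is
  the projection onto the decomposable part, killing exactly the copy of \<open>V\<close> spanned by the
  generators.  So cycles of degree \<open>\<ge> 2\<close> are boundaries, every 1-chain is homologous to its
  generator part, and that part is unique because no face of a chain is a generator.\<close>

fun decomposable :: "'b cbasis \<Rightarrow> bool" where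
  "decomposable (X, (b, p # M) # as) = True"
| "decomposable _ = False"

fun split_head :: "'b cbasis \<Rightarrow> 'b cbasis" where
  "split_head (X, (b, (s, c) # M) # as) = (s # X, (b, []) # (c, M) # as)"
| "split_head x = x"

fun split_form :: "'b cbasis \<Rightarrow> bool" where
  "split_form (s # X, (b, []) # a # as) = True"
| "split_form _ = False"

definition well_formed :: "'b cbasis \<Rightarrow> bool" where
  "well_formed x \<longleftrightarrow> length (fst x) + 1 = length (snd x)"

definition generator :: "'b \<Rightarrow> 'b cbasis" where
  "generator b = ([], [(b, [])])"

lemma face_1_Cons: "face 1 (s # X, a # a' # as) = (X, mmul s a a' # as)"
  by (simp add: face_def)

(* One_nat_def is a simp rule, so simp needs the Suc 0 form as well. *)
lemmas [simp] = face_1_Cons face_1_Cons[unfolded One_nat_def]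

lemma face_Suc_Suc_Cons [simp]:
  "face (Suc (Suc i)) (s # X, a # as) = (s # fst (face (Suc i) (X, as)), a # snd (face (Suc i) (X, as)))"
  by (simp add: face_def)

lemma face_ne_generator: "face i x \<noteq> generator b"
proof
  assume "face i x = generator b"
  then have "snd (face i x) = [(b, [])]"
    by (simp add: generator_def)
  then have "mmul (fst x ! (i - 1)) (snd x ! (i - 1)) (snd x ! i) = (b, [])"
    by (simp add: face_def append_eq_Cons_conv)
  then show False
    by (cases "snd x ! (i - 1)"; cases "snd x ! i") simp
qed

lemma not_decomposable_generator [simp]: "\<not> decomposable (generator b)"
  by (simp add: generator_def)

lemma inj_generator: "inj generator"
  by (simp add: inj_def generator_def)

lemma decomposable_iff: "decomposable x \<longleftrightarrow> (\<exists>X b s c M as. x = (X, (b, (s, c) # M) # as))"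
  by (cases x rule: decomposable.cases) auto

lemma split_form_iff: "split_form y \<longleftrightarrow> (\<exists>s X b a as. y = (s # X, (b, []) # a # as))"
  by (cases y rule: split_form.cases) auto

lemma split_form_split_head: "decomposable x \<Longrightarrow> split_form (split_head x)"
  by (auto simp: decomposable_iff)

lemma face_1_split_head: "decomposable x \<Longrightarrow> face 1 (split_head x) = x"
  by (auto simp: decomposable_iff)

lemmas [simp] = face_1_split_head face_1_split_head[unfolded One_nat_def]

lemma split_head_face_1: "split_form y \<Longrightarrow> decomposable (face 1 y) \<and> split_head (face 1 y) = y"
  by (auto simp: split_form_iff)

lemma split_head_eq_iff:
  "decomposable z \<Longrightarrow> split_head z = y \<longleftrightarrow> split_form y \<and> z = face 1 y"
  using face_1_split_head split_form_split_head split_head_face_1 by metis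

lemma length_split_head:
  "decomposable x \<Longrightarrow>
     length (fst (split_head x)) = Suc (length (fst x)) \<and> length (snd (split_head x)) = Suc (length (snd x))"
  by (auto simp: decomposable_iff)

lemma split_form_if_not_decomposable:
  "\<not> decomposable x \<Longrightarrow> well_formed x \<Longrightarrow> 2 \<le> length (snd x) \<Longrightarrow> split_form x"
  by (cases x rule: split_form.cases) (auto simp: well_formed_def)

lemma decomposable_cases:
  assumes "decomposable x" "well_formed x" "2 \<le> length (snd x)"
  obtains s X b t c M a as where "x = (s # X, (b, (t, c) # M) # a # as)"
proof -
  obtain X b t c M as' where x: "x = (X, (b, (t, c) # M) # as')"
    using assms(1) unfolding decomposable_iff by blast
  with assms(2,3) obtain s X' a as where "X = s # X'" "as' = a # as"
    by (cases X; cases as') (auto simp: well_formed_def)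
  with x show ?thesis
    using that by blast
qed

lemma face_Suc_split_head:
  assumes "decomposable x" "well_formed x" "1 \<le> i" "i < length (snd x)"
  shows "face (Suc i) (split_head x) = split_head (face i x)"
proof -
  have "2 \<le> length (snd x)"
    using assms(3,4) by simp
  then obtain s X b t c M a as where x: "x = (s # X, (b, (t, c) # M) # a # as)"
    using decomposable_cases assms(1,2) by blast
  obtain j where "i = Suc j"
    using assms(3) by (cases i) auto
  then show ?thesis
    unfolding x by (cases j; cases a) simp_all
qed

lemma decomposable_face:
  assumes "decomposable x" "well_formed x" "1 \<le> i" "i < length (snd x)"
  shows "decomposable (face i x)"
proof -
  have "2 \<le> length (snd x)"
    using assms(3,4) by simp
  then obtain s X b t c M a as where x: "x = (s # X, (b, (t, c) # M) # a # as)"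
    using decomposable_cases assms(1,2) by blast
  obtain j where "i = Suc j"
    using assms(3) by (cases i) auto
  then show ?thesis
    unfolding x by (cases j; cases a) simp_all
qed

lemma not_decomposable_face:
  assumes "\<not> decomposable x" "well_formed x" "2 \<le> i" "i < length (snd x)"
  shows "\<not> decomposable (face i x)"
proof -
  have "split_form x"
    using split_form_if_not_decomposable[OF assms(1,2)] assms(3,4) by simp
  then obtain s X b a as where x: "x = (s # X, (b, []) # a # as)"
    unfolding split_form_iff by blast
  obtain k where "i = Suc (Suc k)"
    using assms(3) by (metis add_2_eq_Suc le_Suc_ex)
  then show ?thesis
    unfolding x by simp
qed

definition bd_coeff :: "'b cbasis \<Rightarrow> 'b cbasis \<Rightarrow> 'k::field" where
  "bd_coeff x y = (\<Sum>i\<in>{1..<length (snd x)}. if face i x = y then (-1) ^ i else 0)"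

lemma bd_eq_sum_bd_coeff: "bd f y = (\<Sum>x\<in>{x. f x \<noteq> 0}. f x * bd_coeff x y)"
  by (simp add: bd_def bd_coeff_def)

lemma bd_coeff_split_head:
  assumes "decomposable x" "well_formed x"
  shows "(bd_coeff (split_head x) y :: 'k::field) = - (if x = y then 1 else 0)
           - (\<Sum>i\<in>{1..<length (snd x)}. if split_head (face i x) = y then (-1) ^ i else 0)"
proof -
  define m where "m = length (snd x)"
  define g :: "nat \<Rightarrow> 'k" where "g i = (if face i (split_head x) = y then (-1) ^ i else 0)" for i
  have "m \<noteq> 0"
    using assms(1) unfolding m_def decomposable_iff by auto
  moreover have len: "length (snd (split_head x)) = Suc m"
    using length_split_head[OF assms(1)] by (simp add: m_def)
  ultimately have "bd_coeff (split_head x) y = g 1 + (\<Sum>i\<in>{Suc 1..<Suc m}. g i)"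
    unfolding bd_coeff_def g_def[abs_def] len by (intro sum.atLeast_Suc_lessThan) simp
  also have "(\<Sum>i\<in>{Suc 1..<Suc m}. g i) = (\<Sum>i\<in>{1..<m}. g (Suc i))"
    by (rule sum.shift_bounds_Suc_ivl)
  also have "\<dots> = - (\<Sum>i\<in>{1..<m}. if split_head (face i x) = y then (-1) ^ i else 0)"
    unfolding sum_negf[symmetric]
    by (rule sum.cong) (auto simp: g_def m_def face_Suc_split_head assms)
  finally show ?thesis
    using face_1_split_head[OF assms(1)] by (simp add: g_def m_def)
qed

lemma bd_coeff_face_1:
  assumes "decomposable x" "well_formed x"
  shows "(if split_form y then bd_coeff x (face 1 y) else 0 :: 'k::field)
           = (\<Sum>i\<in>{1..<length (snd x)}. if split_head (face i x) = y then (-1) ^ i else 0)"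
proof (cases "split_form y")
  case True
  have "split_head (face i x) = y \<longleftrightarrow> face i x = face 1 y" if "i \<in> {1..<length (snd x)}" for i
    using split_head_eq_iff[OF decomposable_face[OF assms]] that True by auto
  then have "bd_coeff x (face 1 y) = (\<Sum>i\<in>{1..<length (snd x)}.
                if split_head (face i x) = y then (-1) ^ i else (0 :: 'k))"
    unfolding bd_coeff_def by (intro sum.cong) simp_all
  with True show ?thesis by simp
next
  case False
  have "split_head (face i x) \<noteq> y" if "i \<in> {1..<length (snd x)}" for i
    using split_form_split_head[OF decomposable_face[OF assms]] that False by auto
  with False show ?thesis
    by (simp add: sum.neutral)
qed

lemma bd_coeff_face_1_not_decomposable:
  assumes "\<not> decomposable x" "well_formed x" "2 \<le> length (snd x)"
  shows "(if split_form y then bd_coeff x (face 1 y) else 0 :: 'k::field) = - (if x = y then 1 else 0)"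
proof (cases "split_form y")
  case True
  define g :: "nat \<Rightarrow> 'k" where "g i = (if face i x = face 1 y then (-1) ^ i else 0)" for i
  have "bd_coeff x (face 1 y) = g 1 + (\<Sum>i\<in>{Suc 1..<length (snd x)}. g i)"
    unfolding bd_coeff_def g_def[abs_def] using assms(3) by (intro sum.atLeast_Suc_lessThan) simp
  also have "(\<Sum>i\<in>{Suc 1..<length (snd x)}. g i) = 0"
  proof (intro sum.neutral ballI)
    fix i assume "i \<in> {Suc 1..<length (snd x)}"
    then show "g i = 0"
      using not_decomposable_face[OF assms(1,2), of i] split_head_face_1[OF True] by (auto simp: g_def)
  qed
  also have "g 1 = - (if x = y then 1 else 0)"
    using split_head_face_1[OF True] split_head_face_1[OF split_form_if_not_decomposable[OF assms]]
    by (auto simp: g_def)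
  finally show ?thesis
    using True by simp
next
  case False
  then show ?thesis
    using split_form_if_not_decomposable[OF assms] by auto
qed

text \<open>On a basis chain \<open>x\<close> the homotopy is \<open>-split_head x\<close> if \<open>x\<close> is decomposable and \<open>0\<close>
  otherwise; as \<open>face 1\<close> inverts \<open>split_head\<close>, this can be read off at the target.\<close>
definition homotopy :: "('b cbasis \<Rightarrow> 'k::field) \<Rightarrow> ('b cbasis \<Rightarrow> 'k)" where
  "homotopy f y = (if split_form y then - f (face 1 y) else 0)"

definition dh_hd_coeff :: "'b cbasis \<Rightarrow> 'b cbasis \<Rightarrow> 'k::field" where
  "dh_hd_coeff x y = - (if decomposable x then bd_coeff (split_head x) y else 0)
                     - (if split_form y then bd_coeff x (face 1 y) else 0)"

lemma dh_hd_coeff_eq: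
  assumes "well_formed x"
  shows "dh_hd_coeff x y = (if x = y \<and> (decomposable x \<or> 2 \<le> length (snd x)) then 1 else 0)"
proof -
  consider "decomposable x"
    | "\<not> decomposable x" "2 \<le> length (snd x)"
    | "\<not> decomposable x" "length (snd x) = 1"
    using assms unfolding well_formed_def by linarith
  then show ?thesis
  proof cases
    case 1
    then show ?thesis
      unfolding dh_hd_coeff_def bd_coeff_split_head[OF 1 assms] bd_coeff_face_1[OF 1 assms, symmetric]
      by simp
  next
    case 2
    then show ?thesis
      unfolding dh_hd_coeff_def bd_coeff_face_1_not_decomposable[OF 2(1) assms 2(2)]
      by simp
  next
    case 3
    then show ?thesis
      by (simp add: dh_hd_coeff_def bd_coeff_def)
  qed
qed

lemma chains_finite_support: "f \<in> chains n \<Longrightarrow> finite {x. f x \<noteq> 0}"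
  by (simp add: chains_def)

lemma chains_support:
  assumes "f \<in> chains n" "f x \<noteq> 0"
  shows "well_formed x \<and> length (snd x) = n"
proof -
  from assms have "length (fst x) + 1 = n \<and> length (snd x) = n"
    unfolding chains_def by blast
  then show ?thesis
    unfolding well_formed_def by simp
qed

lemma support_homotopy: "{y. homotopy f y \<noteq> 0} = split_head ` {x. f x \<noteq> 0 \<and> decomposable x}"
proof (intro equalityI subsetI)
  fix y assume "y \<in> {y. homotopy f y \<noteq> 0}"
  then have "split_form y" "f (face 1 y) \<noteq> 0"
    by (auto simp: homotopy_def split: if_splits)
  then show "y \<in> split_head ` {x. f x \<noteq> 0 \<and> decomposable x}"
    using split_head_face_1 by (metis (mono_tags, lifting) image_eqI mem_Collect_eq)
qed (auto simp: homotopy_def split_form_split_head)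

lemma homotopy_chains:
  assumes "f \<in> chains n"
  shows "homotopy f \<in> chains (Suc n)"
proof -
  have "length (fst y) + 1 = Suc n \<and> length (snd y) = Suc n" if "homotopy f y \<noteq> 0" for y
  proof -
    have "y \<in> split_head ` {x. f x \<noteq> 0 \<and> decomposable x}"
      using that unfolding support_homotopy[symmetric] by simp
    then obtain x where x: "y = split_head x" "f x \<noteq> 0" "decomposable x"
      by blast
    then show ?thesis
      using length_split_head[OF x(3)] chains_support[OF assms x(2)] unfolding well_formed_def by simp
  qed
  moreover have "finite {y. homotopy f y \<noteq> 0}"
    unfolding support_homotopy using chains_finite_support[OF assms] by simp
  ultimately show ?thesis
    unfolding chains_def by blast
qed

lemma bd_homotopy:
  assumes "finite {x. f x \<noteq> 0}"
  shows "bd (homotopy f) y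
           = - (\<Sum>x\<in>{x. f x \<noteq> 0}. f x * (if decomposable x then bd_coeff (split_head x) y else 0))"
proof -
  define T where "T = {x. f x \<noteq> 0 \<and> decomposable x}"
  have "inj_on split_head T"
    by (rule inj_on_inverseI[where g = "face 1"]) (simp add: T_def)
  then have "bd (homotopy f) y = (\<Sum>x\<in>T. homotopy f (split_head x) * bd_coeff (split_head x) y)"
    unfolding bd_eq_sum_bd_coeff support_homotopy T_def[symmetric] by (simp add: sum.reindex)
  also have "\<dots> = (\<Sum>x\<in>T. - (f x * bd_coeff (split_head x) y))"
    by (intro sum.cong) (auto simp: T_def homotopy_def split_form_split_head)
  also have "\<dots> = - (\<Sum>x\<in>{x. f x \<noteq> 0}. f x * (if decomposable x then bd_coeff (split_head x) y else 0))"
    unfolding sum_negf T_def using assms by (intro arg_cong[where f = uminus] sum.mono_neutral_cong_left) auto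
  finally show ?thesis .
qed

lemma homotopy_bd:
  "homotopy (bd f) y = - (\<Sum>x\<in>{x. f x \<noteq> 0}. f x * (if split_form y then bd_coeff x (face 1 y) else 0))"
  by (simp add: homotopy_def bd_eq_sum_bd_coeff sum_negf)

lemma bd_homotopy_plus_homotopy_bd:
  assumes "finite {x. f x \<noteq> 0}"
  shows "bd (homotopy f) y + homotopy (bd f) y = (\<Sum>x\<in>{x. f x \<noteq> 0}. f x * dh_hd_coeff x y)"
  unfolding bd_homotopy[OF assms] homotopy_bd dh_hd_coeff_def
  by (simp add: sum.distrib[symmetric] sum_negf[symmetric] algebra_simps)

lemma homotopy_formula:
  assumes "f \<in> chains n"
  shows "bd (homotopy f) y + homotopy (bd f) y = (if decomposable y \<or> 2 \<le> n then f y else 0)"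
proof -
  have "bd (homotopy f) y + homotopy (bd f) y
          = (\<Sum>x\<in>{x. f x \<noteq> 0}. if x = y then (if decomposable y \<or> 2 \<le> n then f y else 0) else 0)"
    unfolding bd_homotopy_plus_homotopy_bd[OF chains_finite_support[OF assms]]
    by (intro sum.cong) (auto simp: dh_hd_coeff_eq chains_support[OF assms])
  also have "\<dots> = (if decomposable y \<or> 2 \<le> n then f y else 0)"
    using chains_finite_support[OF assms] by (simp add: sum.delta')
  finally show ?thesis .
qed

lemma homotopy_zero [simp]: "homotopy (\<lambda>_. 0) = (\<lambda>_. 0)"
  by (simp add: homotopy_def fun_eq_iff)

lemma bd_homotopy_cycle:
  assumes "f \<in> chains n" "2 \<le> n" "bd f = (\<lambda>_. 0)"
  shows "bd (homotopy f) = f"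
proof
  fix y
  show "bd (homotopy f) y = f y"
    using homotopy_formula[OF assms(1), of y] assms(2) unfolding assms(3) by simp
qed

lemma bd_chains_1: "f \<in> chains 1 \<Longrightarrow> bd f = (\<lambda>_. 0)"
  by (simp add: fun_eq_iff bd_eq_sum_bd_coeff bd_coeff_def chains_support)

lemma inclV_generator: "inclV v (generator b) = v b"
  by (simp add: inclV_def generator_def)

lemma inclV_not_generator: "(\<And>b. y \<noteq> generator b) \<Longrightarrow> inclV v y = 0"
  by (auto simp: inclV_def generator_def prod_eq_iff)

lemma degree_1_cases:
  assumes "well_formed y" "length (snd y) = 1"
  obtains "decomposable y" | b where "y = generator b"
  using assms by (cases y rule: decomposable.cases) (auto simp: well_formed_def generator_def)

lemma chains_1_minus_inclV:
  assumes "f \<in> chains 1"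
  shows "f - inclV (\<lambda>b. f (generator b)) = (\<lambda>y. if decomposable y then f y else 0)"
proof
  fix y
  show "(f - inclV (\<lambda>b. f (generator b))) y = (if decomposable y then f y else 0)"
  proof (cases "f y = 0")
    case True
    then show ?thesis
      by (cases "\<exists>b. y = generator b") (auto simp: inclV_generator inclV_not_generator)
  next
    case False
    with chains_support[OF assms] have "well_formed y" "length (snd y) = 1"
      by auto
    then show ?thesis
    proof (cases rule: degree_1_cases)
      case 1
      then have "y \<noteq> generator b" for b
        by auto
      with 1 show ?thesis
        by (simp add: inclV_not_generator)
    qed (simp add: inclV_generator)
  qed
qed

lemma chains_1_homologous_inclV:
  assumes "f \<in> chains 1"
  shows "f - inclV (\<lambda>b. f (generator b)) = bd (homotopy f)"
proof
  fix y
  show "(f - inclV (\<lambda>b. f (generator b))) y = bd (homotopy f) y"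
    using homotopy_formula[OF assms, of y] unfolding chains_1_minus_inclV[OF assms] bd_chains_1[OF assms]
    by simp
qed

lemma bd_generator: "bd g (generator b) = 0"
  by (simp add: bd_eq_sum_bd_coeff bd_coeff_def face_ne_generator)

lemma homologous_inclV_unique:
  assumes "f - inclV w = bd g"
  shows "w = (\<lambda>b. f (generator b))"
proof
  fix b
  have "f (generator b) - w b = 0"
    using fun_cong[OF assms, of "generator b"] by (simp add: bd_generator inclV_generator)
  then show "w b = f (generator b)"
    by simp
qed

lemma finite_generator_support:
  assumes "finite {x. f x \<noteq> 0}"
  shows "finite {b. f (generator b) \<noteq> 0}"
  using finite_vimageI[OF assms inj_generator] by (simp add: vimage_def)

theorem theorem5p6:
  shows "(\<forall>n\<ge>2. \<forall>f\<in>(chains n :: ('b cbasis \<Rightarrow> 'k::field) set).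
            bd f = (\<lambda>_. 0) \<longrightarrow> (\<exists>g\<in>chains (Suc n). bd g = f))
       \<and> (\<forall>f\<in>(chains 1 :: ('b cbasis \<Rightarrow> 'k::field) set).
            \<exists>!v :: 'b \<Rightarrow> 'k. finite {b. v b \<noteq> 0} \<and> (\<exists>g\<in>chains 2. f - inclV v = bd g))"
proof (intro conjI allI impI ballI)
  fix n and f :: "'b cbasis \<Rightarrow> 'k"
  assume "2 \<le> n" "f \<in> chains n" "bd f = (\<lambda>_. 0)"
  then show "\<exists>g\<in>chains (Suc n). bd g = f"
    using homotopy_chains bd_homotopy_cycle by blast
next
  fix f :: "'b cbasis \<Rightarrow> 'k"
  assume f: "f \<in> chains 1"
  have "homotopy f \<in> chains 2"
    using homotopy_chains[OF f] by (simp add: numeral_2_eq_2)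
  then show "\<exists>!v. finite {b. v b \<noteq> 0} \<and> (\<exists>g\<in>chains 2. f - inclV v = bd g)"
    using chains_1_homologous_inclV[OF f] homologous_inclV_unique
      finite_generator_support[OF chains_finite_support[OF f]]
    by (intro ex1I[of _ "\<lambda>b. f (generator b)"]) blast+
qed

end
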